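(* For every cube $K=[-q\mathbf 1,q\mathbf 1]$ ($q>0$) and every $\sigma\in\Sigma$, the Lebesgue measure of $S_K(\sigma)$ satisfies $|S_K(\sigma)|\le 2^{d+1}\psi_K(\sigma)$.
   Context: Order conventions: for $x,y\in\mathbb R^d$, $x\le y$ iff $x_i\le y_i$ for all $i$; $\mathbf 1=(1,\dots,1)$; $|x|_\infty=\max_i|x_i|$; $x!=x_1x_2\cdots x_d$; $[a,b]=\{x:a\le x\le b\}$. Fix $d\ge2$. $\mathbb Z^*=\mathbb Z\cup\{\pm\infty\}$. The state space $\Sigma$ is the set of functions $\sigma:\mathbb R^d\to\mathbb Z^*$ such that (i) $x\le y$ implies $\sigma(x)\le\sigma(y)$; (ii) for every cube $[-q\mathbf 1,q\mathbf 1]$ there are finite partitions $-q=s_i^0<\dots<s_i^{m_i}=q$ of each coordinate axis such that $\sigma$ is constant on each rectangle $\prod_i[s_i^{k_i},s_i^{k_i+1})$; (iii) for every $b\in\mathbb R^d$, $\lim_{M\to\infty}\sup\{|y|_\infty^{-d/(d+1)}\sigma(y):y\le b,|y|_\infty\ge M\}=-\infty$. For $\sigma\in\Sigma$ and $x\in\mathbb R^d$: $S_x(\sigma)=\{y: y\le x,\ \sigma(y)=\sigma(x)\}$ if $\sigma(x)$ is finite, and $S_x(\sigma)=\emptyset$ if $\sigma(x)=\pm\infty$; $S_K(\sigma)=\bigcup_{x\in K}S_x(\sigma)$. For $b\in\mathbb R^d$, $h\in\mathbb Z$, $y^{b,h}(\sigma)$ is the maximal point $y\le b$ such that the rectangle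 $[y,b]$ contains $\{x\le b:\sigma(x)\ge h\}$ (and $y^{b,h}(\sigma)=b$ if this set is empty). With $K=[-q\mathbf 1,q\mathbf 1]$ write $y^h=y^{q\mathbf 1,h}(\sigma)$ and $\lambda_k(\sigma)=\sup_{-\infty<h\le k-2}(q\mathbf 1-y^h)!\,(k-h)^{-(d+1)}$ for $k\in\mathbb Z$. $I(K,\sigma)=\min\{\sigma(x):x\in K,\sigma(x)\text{ finite}\}$, $J(K,\sigma)=\max\{\sigma(x):x\in K,\sigma(x)\text{ finite}\}$ (if $\sigma=\pm\infty$ on all of $K$, set $I=\infty=-J$). Finally $\psi_K(\sigma)=\big(\sum_{k=I(K,\sigma)+1}^{J(K,\sigma)+1}\lambda_k^2(\sigma)\big)^{1/2}$ (empty sum $=0$). *)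

theory Defs
  imports "HOL-Analysis.Analysis"
begin

text \<open>Dimension d is CARD('n); points of R^d are real^'n with the componentwise
order (less_eq_vec_def).\<close>

definition supnorm :: "real ^ 'n \<Rightarrow> real" where
  "supnorm y = Max (range (\<lambda>i. \<bar>y $ i\<bar>))"

definition vprod :: "real ^ 'n \<Rightarrow> real" where
  "vprod x = (\<Prod>i\<in>UNIV. x $ i)"

definition cube :: "real \<Rightarrow> (real ^ 'n) set" where
  "cube q = {- vec q .. vec q}"

definition int_star :: "ereal set" where
  "int_star = {\<infinity>, -\<infinity>} \<union> range (\<lambda>n::int. ereal (real_of_int n))"

definition StateSpace :: "(real ^ 'n \<Rightarrow> ereal) set" where
  "StateSpace = {\<sigma>.
     (\<forall>x. \<sigma> x \<in> int_star) \<and>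
     mono \<sigma> \<and>
     (\<forall>q>0. \<exists>(s :: 'n \<Rightarrow> nat \<Rightarrow> real) (m :: 'n \<Rightarrow> nat).
        (\<forall>i. s i 0 = -q \<and> s i (m i) = q \<and> (\<forall>k < m i. s i k < s i (Suc k))) \<and>
        (\<forall>k :: 'n \<Rightarrow> nat. (\<forall>i. k i < m i) \<longrightarrow>
            (\<forall>x y. (\<forall>i. s i (k i) \<le> x $ i \<and> x $ i < s i (Suc (k i))) \<longrightarrow>
                   (\<forall>i. s i (k i) \<le> y $ i \<and> y $ i < s i (Suc (k i))) \<longrightarrow>
                   \<sigma> x = \<sigma> y))) \<and>
     (\<forall>b. ((\<lambda>M::real. Sup {ereal (supnorm y powr (- real CARD('n) / (real CARD('n) + 1))) * \<sigma> y
                           | y. y \<le> b \<and> supnorm y \<ge> M}) \<longlongrightarrow> -\<infinity>) at_top)}"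

definition Sx :: "(real ^ 'n \<Rightarrow> ereal) \<Rightarrow> real ^ 'n \<Rightarrow> (real ^ 'n) set" where
  "Sx \<sigma> x = (if \<bar>\<sigma> x\<bar> \<noteq> \<infinity> then {y. y \<le> x \<and> \<sigma> y = \<sigma> x} else {})"

definition SK :: "(real ^ 'n \<Rightarrow> ereal) \<Rightarrow> (real ^ 'n) set \<Rightarrow> (real ^ 'n) set" where
  "SK \<sigma> K = (\<Union>x\<in>K. Sx \<sigma> x)"

definition ybh :: "(real ^ 'n \<Rightarrow> ereal) \<Rightarrow> real ^ 'n \<Rightarrow> int \<Rightarrow> real ^ 'n" where
  "ybh \<sigma> b h = (GREATEST y. y \<le> b \<and> {x. x \<le> b \<and> \<sigma> x \<ge> ereal (real_of_int h)} \<subseteq> {y..b})"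

definition lam :: "real \<Rightarrow> (real ^ 'n \<Rightarrow> ereal) \<Rightarrow> int \<Rightarrow> ereal" where
  "lam q \<sigma> k = (SUP h\<in>{..k-2}.
      ereal (vprod (vec q - ybh \<sigma> (vec q) h) / (real_of_int (k - h)) ^ (CARD('n) + 1)))"

definition Ival :: "(real ^ 'n) set \<Rightarrow> (real ^ 'n \<Rightarrow> ereal) \<Rightarrow> ereal" where
  "Ival K \<sigma> = Inf {\<sigma> x | x. x \<in> K \<and> \<bar>\<sigma> x\<bar> \<noteq> \<infinity>}"

definition Jval :: "(real ^ 'n) set \<Rightarrow> (real ^ 'n \<Rightarrow> ereal) \<Rightarrow> ereal" where
  "Jval K \<sigma> = Sup {\<sigma> x | x. x \<in> K \<and> \<bar>\<sigma> x\<bar> \<noteq> \<infinity>}"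

definition psi :: "real \<Rightarrow> (real ^ 'n \<Rightarrow> ereal) \<Rightarrow> ereal" where
  "psi q \<sigma> = (let s = (\<Sum>k\<in>{k::int. Ival (cube q) \<sigma> + 1 \<le> ereal (real_of_int k)
                                  \<and> ereal (real_of_int k) \<le> Jval (cube q) \<sigma> + 1}.
                       lam q \<sigma> k * lam q \<sigma> k)
               in if s = \<infinity> then \<infinity> else ereal (sqrt (real_of_ereal s)))"

end

theory Submission
  imports Defs
begin

(*
  Measurability: since sigma is monotone, S_x(sigma) = {y <= x} Int {sigma >= sigma(x)}, so grouping
  the points x by the integer sigma(x) writes S_K(sigma) as a countable union of intersections of a
  down-set with an up-set. Down-sets are Lebesgue measurable because their frontier is null: no
  two frontier points differ by a positive multiple of 1, so the translates of a bounded piece of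
  the frontier by the vectors 1/(k+1) * 1 are pairwise disjoint and all of the same measure
  inside one bounded box.

  Bound: sigma is piecewise constant on K, so its finite values there form a finite set of
  integers with least element I. Every point of S_K(sigma) lies below q1 and has sigma >= I,
  so S_K(sigma) is contained in the box [y^(I-1), q1]. Its volume (q1 - y^(I-1))! is the term
  h = I - 1 of lambda_(I+1) multiplied by (k - h)^(d+1) = 2^(d+1), and lambda_(I+1) <= psi_K(sigma)
  because I + 1 lies in the summation range.
*)

lemma negligible_disjoint_translates:
  fixes S T :: "'a::euclidean_space set" and c :: "nat \<Rightarrow> 'a"
  assumes S: "S \<in> lmeasurable" and T: "T \<in> lmeasurable"
    and sub: "\<And>k. (+) (c k) ` S \<subseteq> T"
    and disj: "\<And>j k. j \<noteq> k \<Longrightarrow> disjnt ((+) (c j) ` S) ((+) (c k) ` S)"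
  shows "negligible S"
proof -
  have bound: "real N * measure lebesgue S \<le> measure lebesgue T" for N
  proof -
    have "real N * measure lebesgue S = measure lebesgue (\<Union>k<N. (+) (c k) ` S)"
      using S disj
      by (subst measure_UNION') (auto simp: measurable_translation measure_translation pairwise_def)
    also have "\<dots> \<le> measure lebesgue T"
      using S T sub
      by (intro measure_mono_fmeasurable) (auto intro!: sets.finite_UN fmeasurableD measurable_translation)
    finally show ?thesis .
  qed
  have "measure lebesgue S = 0"
  proof (rule ccontr)
    assume "measure lebesgue S \<noteq> 0"
    then have "measure lebesgue S > 0" by (simp add: order_less_le)
    then obtain N where "measure lebesgue T < real N * measure lebesgue S"
      using reals_Archimedean3 by blast
    with bound[of N] show False by simp
  qed
  with S show ?thesis by (simp add: negligible_iff_measure0)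
qed

lemma downset_shift_in_interior:
  fixes D :: "(real^'n) set"
  assumes down: "\<And>x y. y \<le> x \<Longrightarrow> x \<in> D \<Longrightarrow> y \<in> D"
    and y: "y \<in> closure D" and t: "t > 0"
  shows "y - vec t \<in> interior D"
proof -
  obtain w where w: "w \<in> D" "dist w y < t/2"
    using y t unfolding closure_approachable by (meson half_gt_zero)
  have "z \<le> w" if z: "dist z (y - vec t) < t/2" for z
    unfolding less_eq_vec_def
  proof
    fix i
    have "\<bar>z$i - (y$i - t)\<bar> < t/2" "\<bar>w$i - y$i\<bar> < t/2"
      using dist_vec_nth_le[of z i "y - vec t"] dist_vec_nth_le[of w i y] z w(2)
      by (simp_all add: dist_real_def)
    then show "z$i \<le> w$i" by linarith
  qed
  then have "ball (y - vec t) (t/2) \<subseteq> D"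
    using down[OF _ w(1)] by (auto simp: dist_commute)
  then show ?thesis unfolding mem_interior using t by (meson half_gt_zero)
qed

lemma negligible_frontier_downset:
  fixes D :: "(real^'n) set"
  assumes down: "\<And>x y. y \<le> x \<Longrightarrow> x \<in> D \<Longrightarrow> y \<in> D"
  shows "negligible (frontier D)"
proof (subst negligible_on_intervals, intro allI)
  fix a b :: "real^'n"
  define c :: "nat \<Rightarrow> real^'n" where "c k = vec (1 / real (Suc k))" for k
  have no_shift: "p - vec s \<notin> frontier D" if "p \<in> frontier D" "s > 0" for p s
  proof -
    have "p - vec s \<in> interior D"
      by (rule downset_shift_in_interior) (use down that in \<open>auto simp: frontier_def\<close>)
    then show ?thesis by (simp add: frontier_def)
  qed
  show "negligible (frontier D \<inter> cbox a b)"
  proof (rule negligible_disjoint_translates)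
    show "frontier D \<inter> cbox a b \<in> lmeasurable"
      by (intro lmeasurable_compact closed_Int_compact) auto
    show "cbox a (b + vec 1) \<in> lmeasurable" by simp
    show "(+) (c k) ` (frontier D \<inter> cbox a b) \<subseteq> cbox a (b + vec 1)" for k
    proof
      fix z assume "z \<in> (+) (c k) ` (frontier D \<inter> cbox a b)"
      then obtain p where p: "p \<in> cbox a b" and z: "z = c k + p" by auto
      have step: "0 \<le> 1 / (1 + real k)" "1 / (1 + real k) \<le> 1" by simp_all
      show "z \<in> cbox a (b + vec 1)"
        unfolding mem_box_cart
      proof
        fix i
        have "a$i \<le> p$i" "p$i \<le> b$i" "z$i = p$i + 1 / (1 + real k)"
          using p by (simp_all add: mem_box_cart z c_def)
        with step have "a$i \<le> z$i" "z$i \<le> b$i + 1" by linarith+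
        then show "a$i \<le> z$i \<and> z$i \<le> (b + vec 1)$i" by simp
      qed
    qed
    have "c j + p \<noteq> c k + p'" if "p \<in> frontier D" "p' \<in> frontier D" "j < k" for p p' j k
    proof
      assume "c j + p = c k + p'"
      then have "p = p' - vec (1 / real (Suc j) - 1 / real (Suc k))"
        by (simp add: c_def vec_eq_iff algebra_simps)
      moreover have "1 / real (Suc j) - 1 / real (Suc k) > 0"
        using \<open>j < k\<close> by (simp add: frac_less2)
      ultimately show False using no_shift that by blast
    qed
    then have "c j + p \<noteq> c k + p'" if "p \<in> frontier D" "p' \<in> frontier D" "j \<noteq> k" for p p' j k
      using that by (metis nat_neq_iff)
    then show "disjnt ((+) (c j) ` (frontier D \<inter> cbox a b)) ((+) (c k) ` (frontier D \<inter> cbox a b))"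
      if "j \<noteq> k" for j k
      using that unfolding disjnt_def by blast
  qed
qed

lemma sets_lebesgue_downset:
  fixes D :: "(real^'n) set"
  assumes down: "\<And>x y. y \<le> x \<Longrightarrow> x \<in> D \<Longrightarrow> y \<in> D"
  shows "D \<in> sets lebesgue"
proof -
  have "D = interior D \<union> (D - interior D)" using interior_subset by blast
  moreover have "negligible (frontier D)"
    using down by (rule negligible_frontier_downset)
  then have "negligible (D - interior D)"
    by (rule negligible_subset) (auto simp: frontier_def closure_subset[THEN subsetD])
  moreover have "interior D \<in> sets lebesgue" by (simp add: borel_open)
  ultimately show ?thesis
    by (metis negligible_imp_sets sets.Un)
qed

lemma sets_lebesgue_upset:
  fixes U :: "(real^'n) set"
  assumes up: "\<And>x y. x \<le> y \<Longrightarrow> x \<in> U \<Longrightarrow> y \<in> U"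
  shows "U \<in> sets lebesgue"
proof -
  have "- U \<in> sets lebesgue"
    using up by (intro sets_lebesgue_downset) blast
  then show ?thesis
    using sets.compl_sets[of "- U" lebesgue] by (simp add: Compl_eq_Diff_UNIV Diff_Diff_Int)
qed

lemma int_star_finite_is_int:
  assumes "v \<in> int_star" "\<bar>v\<bar> \<noteq> \<infinity>"
  shows "\<exists>n::int. v = ereal (of_int n)"
  using assms unfolding int_star_def by auto

lemma SK_eq_Union_levels:
  fixes \<sigma> :: "real ^ 'n \<Rightarrow> ereal"
  assumes mono: "mono \<sigma>" and int: "\<And>x. \<sigma> x \<in> int_star"
  shows "SK \<sigma> K = (\<Union>n::int. {y. \<exists>x\<in>K. \<sigma> x = ereal (of_int n) \<and> y \<le> x} \<inter> {y. ereal (of_int n) \<le> \<sigma> y})"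
    (is "_ = (\<Union>n. ?D n \<inter> ?U n)")
proof
  show "SK \<sigma> K \<subseteq> (\<Union>n. ?D n \<inter> ?U n)"
  proof
    fix y assume "y \<in> SK \<sigma> K"
    then obtain x where x: "x \<in> K" "\<bar>\<sigma> x\<bar> \<noteq> \<infinity>" "y \<le> x" "\<sigma> y = \<sigma> x"
      unfolding SK_def Sx_def by (auto split: if_splits)
    then obtain n :: int where "\<sigma> x = ereal (of_int n)"
      using int_star_finite_is_int[OF int x(2)] by blast
    with x show "y \<in> (\<Union>n. ?D n \<inter> ?U n)" by auto
  qed
  show "(\<Union>n. ?D n \<inter> ?U n) \<subseteq> SK \<sigma> K"
  proof
    fix y assume "y \<in> (\<Union>n. ?D n \<inter> ?U n)"
    then obtain n x where x: "x \<in> K" "\<sigma> x = ereal (of_int n)" "y \<le> x" "ereal (of_int n) \<le> \<sigma> y"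
      by auto
    moreover have "\<sigma> y \<le> \<sigma> x" using mono x(3) by (rule monoD)
    ultimately show "y \<in> SK \<sigma> K" unfolding SK_def Sx_def by force
  qed
qed

lemma sets_lebesgue_SK:
  fixes \<sigma> :: "real ^ 'n \<Rightarrow> ereal"
  assumes mono: "mono \<sigma>" and "\<And>x. \<sigma> x \<in> int_star"
  shows "SK \<sigma> K \<in> sets lebesgue"
proof -
  have "{y. \<exists>x\<in>K. \<sigma> x = ereal (of_int n) \<and> y \<le> x} \<in> sets lebesgue" for n :: int
    by (rule sets_lebesgue_downset) (auto intro: order_trans)
  moreover have "{y. ereal (of_int n) \<le> \<sigma> y} \<in> sets lebesgue" for n :: int
    by (rule sets_lebesgue_upset) (auto dest: monoD[OF mono] intro: order_trans)
  ultimately show ?thesis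
    unfolding SK_eq_Union_levels[OF assms] by (intro sets.countable_UN) auto
qed

lemma partition_cell_exists:
  fixes s :: "nat \<Rightarrow> real"
  assumes "s 0 \<le> x" "x < s m"
  shows "\<exists>k<m. s k \<le> x \<and> x < s (Suc k)"
  using assms
proof (induction m)
  case (Suc m)
  then show ?case
    by (cases "x < s m") (auto intro: less_SucI)
qed simp

lemma StateSpace_finite_image_cube:
  fixes \<sigma> :: "real ^ 'n \<Rightarrow> ereal"
  assumes "\<sigma> \<in> StateSpace" "q > 0"
  shows "finite (\<sigma> ` cube q)"
proof -
  \<comment> \<open>The cells are half-open, so a partition of the larger cube is needed to cover the faces \<open>x $ i = q\<close>.\<close>
  have "q + 1 > 0" using assms(2) by simp
  with assms(1) obtain s :: "'n \<Rightarrow> nat \<Rightarrow> real" and m :: "'n \<Rightarrow> nat" where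
    s: "\<forall>i. s i 0 = -(q+1) \<and> s i (m i) = q+1 \<and> (\<forall>k < m i. s i k < s i (Suc k))" and
    const: "\<forall>k. (\<forall>i. k i < m i) \<longrightarrow>
              (\<forall>x y. (\<forall>i. s i (k i) \<le> x $ i \<and> x $ i < s i (Suc (k i))) \<longrightarrow>
                     (\<forall>i. s i (k i) \<le> y $ i \<and> y $ i < s i (Suc (k i))) \<longrightarrow> \<sigma> x = \<sigma> y)"
    unfolding StateSpace_def by blast
  have "\<sigma> ` cube q \<subseteq> (\<lambda>k. \<sigma> (\<chi> i. s i (k i))) ` (\<Pi>\<^sub>E i\<in>UNIV. {..<m i})"
  proof
    fix v assume "v \<in> \<sigma> ` cube q"
    then obtain x where x: "x \<in> cube q" "v = \<sigma> x" by auto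
    have "\<forall>i. \<exists>k<m i. s i k \<le> x$i \<and> x$i < s i (Suc k)"
    proof
      fix i
      have "-q \<le> x$i" "x$i \<le> q" using x(1) by (auto simp: cube_def less_eq_vec_def)
      then show "\<exists>k<m i. s i k \<le> x$i \<and> x$i < s i (Suc k)"
        using s by (intro partition_cell_exists) auto
    qed
    then obtain k where k: "\<And>i. k i < m i \<and> s i (k i) \<le> x$i \<and> x$i < s i (Suc (k i))"
      by metis
    then have "s i (k i) < s i (Suc (k i))" for i by (meson le_less_trans)
    then have "\<sigma> x = \<sigma> (\<chi> i. s i (k i))"
      using const[rule_format, of k x "\<chi> i. s i (k i)"] k by simp
    then show "v \<in> (\<lambda>k. \<sigma> (\<chi> i. s i (k i))) ` (\<Pi>\<^sub>E i\<in>UNIV. {..<m i})"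
      using k x(2) by (auto simp: PiE_UNIV_domain)
  qed
  then show ?thesis
    by (rule finite_subset) (simp add: finite_PiE)
qed

lemma ereal_mult_ge_neg_abs:
  assumes "0 < c" "c \<le> 1" "ereal r \<le> x"
  shows "ereal (- \<bar>r\<bar>) \<le> ereal c * x"
proof (cases x)
  case (real v)
  have "- \<bar>r\<bar> \<le> c * v"
  proof (cases "v \<ge> 0")
    case True
    then have "0 \<le> c * v" using assms by simp
    then show ?thesis by linarith
  next
    case False
    then have "v \<le> c * v" using assms by (simp add: mult_le_cancel_right1)
    with assms real show ?thesis by simp
  qed
  with real show ?thesis by simp
qed (use assms in auto)

lemma StateSpace_upper_level_bounded:
  fixes \<sigma> :: "real ^ 'n \<Rightarrow> ereal"
  assumes "\<sigma> \<in> StateSpace"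
  shows "\<exists>M. \<forall>y. y \<le> b \<and> ereal r \<le> \<sigma> y \<longrightarrow> supnorm y < M"
proof -
  define e where "e = - real CARD('n) / (real CARD('n) + 1)"
  let ?F = "\<lambda>M. Sup {ereal (supnorm y powr e) * \<sigma> y | y. y \<le> b \<and> supnorm y \<ge> M}"
  have "(?F \<longlongrightarrow> -\<infinity>) at_top" using assms unfolding StateSpace_def e_def by blast
  then obtain M0 where M0: "\<And>M. M \<ge> M0 \<Longrightarrow> ?F M < ereal (- \<bar>r\<bar>)"
    unfolding tendsto_MInfty eventually_at_top_linorder by blast
  have "supnorm y < max M0 1" if y: "y \<le> b" "ereal r \<le> \<sigma> y" for y
  proof (rule ccontr)
    assume "\<not> supnorm y < max M0 1"
    then have big: "supnorm y \<ge> max M0 1" by (simp add: not_less)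
    have "e \<le> 0" by (simp add: e_def)
    then have "0 < supnorm y powr e" "supnorm y powr e \<le> 1"
      using big powr_mono[of e 0 "supnorm y"] by auto
    then have "ereal (- \<bar>r\<bar>) \<le> ereal (supnorm y powr e) * \<sigma> y"
      using y(2) by (rule ereal_mult_ge_neg_abs)
    also have "\<dots> \<le> ?F (max M0 1)"
      using y big by (intro Sup_upper) auto
    also have "\<dots> < ereal (- \<bar>r\<bar>)" by (rule M0) simp
    finally show False by simp
  qed
  then show ?thesis by blast
qed

lemma StateSpace_upper_level_bdd_below:
  fixes \<sigma> :: "real ^ 'n \<Rightarrow> ereal"
  assumes "\<sigma> \<in> StateSpace"
  shows "bdd_below {x. x \<le> b \<and> ereal r \<le> \<sigma> x}"
proof -
  obtain M where M: "\<And>y. y \<le> b \<Longrightarrow> ereal r \<le> \<sigma> y \<Longrightarrow> supnorm y < M"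
    using StateSpace_upper_level_bounded[OF assms] by blast
  have component_le: "\<bar>x$i\<bar> \<le> supnorm x" for x :: "real^'n" and i
    unfolding supnorm_def by (rule Max_ge) auto
  have "- vec M \<le> x" if "x \<le> b" "ereal r \<le> \<sigma> x" for x
    unfolding less_eq_vec_def
  proof
    fix i
    have "\<bar>x$i\<bar> < M" using M[OF that] component_le[of x i] by linarith
    then show "(- vec M)$i \<le> x$i" by simp
  qed
  then show ?thesis by (intro bdd_belowI[where m="- vec M"]) blast
qed

lemma Greatest_box_containing:
  fixes A :: "'a::conditionally_complete_lattice set"
  assumes "A \<subseteq> {..b}" "bdd_below A"
  defines "g \<equiv> GREATEST y. y \<le> b \<and> A \<subseteq> {y..b}"
  shows "g \<le> b" "A \<subseteq> {g..b}"
proof -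
  let ?P = "\<lambda>y. y \<le> b \<and> A \<subseteq> {y..b}"
  obtain w where w: "?P w" "\<And>y. ?P y \<Longrightarrow> y \<le> w"
  proof (cases "A = {}")
    case False
    have "?P (Inf A)"
      using assms False by (auto intro: cInf_lower cInf_lower2)
    moreover have "y \<le> Inf A" if "?P y" for y
      using that False by (intro cInf_greatest) auto
    ultimately show ?thesis using that by blast
  qed (use that in auto)
  then have "g = w" unfolding g_def by (rule Greatest_equality)
  with w show "g \<le> b" "A \<subseteq> {g..b}" by auto
qed

lemma ybh_box_contains_upper_level:
  fixes \<sigma> :: "real ^ 'n \<Rightarrow> ereal"
  assumes "\<sigma> \<in> StateSpace"
  shows "ybh \<sigma> b h \<le> b" "{x. x \<le> b \<and> ereal (real_of_int h) \<le> \<sigma> x} \<subseteq> {ybh \<sigma> b h..b}"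
  using Greatest_box_containing[of "{x. x \<le> b \<and> ereal (real_of_int h) \<le> \<sigma> x}" b]
    StateSpace_upper_level_bdd_below[OF assms]
  unfolding ybh_def by auto

lemma vprod_nonneg: "0 \<le> x \<Longrightarrow> 0 \<le> vprod x"
  unfolding vprod_def less_eq_vec_def by (simp add: prod_nonneg)

lemma emeasure_lebesgue_Icc_vprod:
  fixes a b :: "real ^ 'n"
  assumes "a \<le> b"
  shows "emeasure lebesgue {a..b} = ennreal (vprod (b - a))"
proof -
  have "cbox a b \<noteq> {}" using assms by (auto simp: interval_cbox_cart[symmetric])
  have "emeasure lebesgue (cbox a b) = ennreal (measure lebesgue (cbox a b))"
    by (rule emeasure_eq_measure2) simp
  also have "measure lebesgue (cbox a b) = measure lborel (cbox a b)"
    by (rule measure_completion) simp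
  also have "\<dots> = vprod (b - a)"
    using content_cbox_cart[OF \<open>cbox a b \<noteq> {}\<close>] by (simp add: vprod_def)
  finally show ?thesis by (simp add: interval_cbox_cart)
qed

lemma SK_subset_ybh_box:
  fixes \<sigma> :: "real ^ 'n \<Rightarrow> ereal"
  assumes "\<sigma> \<in> StateSpace" "K \<subseteq> {..b}"
    and lower: "\<And>x. x \<in> K \<Longrightarrow> \<bar>\<sigma> x\<bar> \<noteq> \<infinity> \<Longrightarrow> ereal (of_int h) \<le> \<sigma> x"
  shows "SK \<sigma> K \<subseteq> {ybh \<sigma> b h..b}"
proof
  fix y assume "y \<in> SK \<sigma> K"
  then obtain x where x: "x \<in> K" "\<bar>\<sigma> x\<bar> \<noteq> \<infinity>" "y \<le> x" "\<sigma> y = \<sigma> x"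
    unfolding SK_def Sx_def by (auto split: if_splits)
  have "y \<le> b" using x assms(2) by (auto intro: order_trans)
  moreover have "ereal (of_int h) \<le> \<sigma> y" using lower[OF x(1,2)] x(4) by simp
  ultimately show "y \<in> {ybh \<sigma> b h..b}"
    using ybh_box_contains_upper_level[OF assms(1)] by blast
qed

lemma Ival_Jval_integers:
  fixes \<sigma> :: "real ^ 'n \<Rightarrow> ereal"
  assumes "finite (\<sigma> ` K)" "\<And>x. \<sigma> x \<in> int_star" "x \<in> K" "\<bar>\<sigma> x\<bar> \<noteq> \<infinity>"
  obtains I J :: int where "Ival K \<sigma> = ereal (of_int I)" "Jval K \<sigma> = ereal (of_int J)" "I \<le> J"
proof -
  define V where "V = \<sigma> ` {x \<in> K. \<bar>\<sigma> x\<bar> \<noteq> \<infinity>}"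
  have "finite V" unfolding V_def by (rule finite_subset[OF image_mono assms(1)]) auto
  moreover have "\<sigma> x \<in> V" unfolding V_def using assms(3,4) by (intro imageI) simp
  ultimately have V: "finite V" "V \<noteq> {}" by auto
  have int: "\<exists>n::int. v = ereal (of_int n)" if "v \<in> V" for v
  proof -
    from that obtain y where "y \<in> {x \<in> K. \<bar>\<sigma> x\<bar> \<noteq> \<infinity>}" "v = \<sigma> y"
      unfolding V_def by (rule imageE)
    then show ?thesis using int_star_finite_is_int[OF assms(2)[of y]] by simp
  qed
  obtain I J :: int where "Min V = ereal (of_int I)" "Max V = ereal (of_int J)"
    using int[OF Min_in[OF V]] int[OF Max_in[OF V]] by blast
  moreover have "Ival K \<sigma> = Min V" "Jval K \<sigma> = Max V"
    unfolding Ival_def Jval_def setcompr_eq_image V_def[symmetric]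
    by (simp_all only: Min_Inf[OF V] Max_Sup[OF V])
  moreover have "Min V \<le> Max V" by (rule Max_ge[OF V(1) Min_in[OF V]])
  ultimately show ?thesis using that[of I J] by simp
qed

lemma ereal_le_sqrt_if_square_le:
  fixes l s :: ereal
  assumes "0 \<le> l" "l * l \<le> s"
  shows "l \<le> (if s = \<infinity> then \<infinity> else ereal (sqrt (real_of_ereal s)))"
proof (cases "s = \<infinity>")
  case False
  with assms obtain a b where "l = ereal a" "s = ereal b" "0 \<le> a" "a * a \<le> b"
    by (cases l; cases s) auto
  then show ?thesis by (simp add: real_le_rsqrt power2_eq_square)
qed simp

lemma psi_nonneg: "0 \<le> psi q \<sigma>"
  unfolding psi_def Let_def
  by (auto intro!: real_of_ereal_pos sum_nonneg simp: ereal_zero_le_0_iff)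

lemma lam_le_psi:
  assumes "Ival (cube q) \<sigma> = ereal (of_int I)" "Jval (cube q) \<sigma> = ereal (of_int J)"
    and "I + 1 \<le> k" "k \<le> J + 1"
  shows "lam q \<sigma> k \<le> psi q \<sigma>"
proof (cases "0 \<le> lam q \<sigma> k")
  case True
  define T where "T = {j::int. Ival (cube q) \<sigma> + 1 \<le> ereal (of_int j) \<and>
                              ereal (of_int j) \<le> Jval (cube q) \<sigma> + 1}"
  have "T \<subseteq> {I + 1 .. J + 1}" "k \<in> T"
    using assms unfolding T_def by (auto simp: one_ereal_def)
  have "finite T" using \<open>T \<subseteq> _\<close> by (rule finite_subset) simp
  have "lam q \<sigma> k * lam q \<sigma> k \<le> (\<Sum>j\<in>T. lam q \<sigma> j * lam q \<sigma> j)"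
    unfolding sum.remove[OF \<open>finite T\<close> \<open>k \<in> T\<close>]
    by (rule add_increasing2) (auto intro!: sum_nonneg simp: ereal_zero_le_0_iff)
  with True show ?thesis
    unfolding psi_def Let_def T_def[symmetric] by (rule ereal_le_sqrt_if_square_le)
next
  case False
  then show ?thesis using psi_nonneg[of q \<sigma>] by simp
qed

lemma vprod_ybh_le_lam:
  fixes \<sigma> :: "real ^ 'n \<Rightarrow> ereal"
  assumes "h \<le> k - 2"
  shows "ereal (vprod (vec q - ybh \<sigma> (vec q) h) / (real_of_int (k - h)) ^ (CARD('n) + 1)) \<le> lam q \<sigma> k"
  unfolding lam_def using assms by (intro SUP_upper) auto

lemma Ival_le: "x \<in> K \<Longrightarrow> \<bar>\<sigma> x\<bar> \<noteq> \<infinity> \<Longrightarrow> Ival K \<sigma> \<le> \<sigma> x"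
  unfolding Ival_def by (intro Inf_lower) auto

lemma emeasure_SK_le_lam:
  fixes \<sigma> :: "real ^ 'n \<Rightarrow> ereal"
  assumes "\<sigma> \<in> StateSpace" and I: "Ival (cube q) \<sigma> = ereal (of_int I)"
  shows "enn2ereal (emeasure lebesgue (SK \<sigma> (cube q))) \<le> 2 ^ (CARD('n) + 1) * lam q \<sigma> (I + 1)"
proof -
  define y where "y = ybh \<sigma> (vec q) (I - 1)"
  have "y \<le> vec q" unfolding y_def by (rule ybh_box_contains_upper_level[OF assms(1)])
  have "ereal (of_int (I - 1)) \<le> \<sigma> x" if "x \<in> cube q" "\<bar>\<sigma> x\<bar> \<noteq> \<infinity>" for x
    using Ival_le[of x "cube q" \<sigma>] that I by (simp add: order_trans[rotated])
  then have "SK \<sigma> (cube q) \<subseteq> {y..vec q}" unfolding y_def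
    by (intro SK_subset_ybh_box assms(1)) (auto simp: cube_def)
  then have "emeasure lebesgue (SK \<sigma> (cube q)) \<le> emeasure lebesgue {y..vec q}"
    by (rule emeasure_mono) (simp add: interval_cbox_cart[symmetric])
  also have "\<dots> = ennreal (vprod (vec q - y))"
    using \<open>y \<le> vec q\<close> by (rule emeasure_lebesgue_Icc_vprod)
  finally have "enn2ereal (emeasure lebesgue (SK \<sigma> (cube q))) \<le> ereal (vprod (vec q - y))"
    using vprod_nonneg[of "vec q - y"] \<open>y \<le> vec q\<close> by (simp add: less_eq_ennreal.rep_eq)
  also have "\<dots> = 2 ^ (CARD('n) + 1) * ereal (vprod (vec q - y) / 2 ^ (CARD('n) + 1))"
    by (simp del: power_Suc)
  also have "\<dots> \<le> 2 ^ (CARD('n) + 1) * lam q \<sigma> (I + 1)"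
    using vprod_ybh_le_lam[where h="I - 1" and k="I + 1" and \<sigma>=\<sigma> and q=q] unfolding y_def
    by (intro ereal_mult_left_mono) auto
  finally show ?thesis .
qed

theorem lemma7p2:
  fixes q :: real and \<sigma> :: "real ^ 'n \<Rightarrow> ereal"
  assumes "CARD('n) \<ge> 2"
    and "q > 0"
    and "\<sigma> \<in> StateSpace"
  shows "SK \<sigma> (cube q) \<in> sets lebesgue \<and>
         enn2ereal (emeasure lebesgue (SK \<sigma> (cube q))) \<le> 2 ^ (CARD('n) + 1) * psi q \<sigma>"
proof
  have mono: "mono \<sigma>" and int: "\<And>x. \<sigma> x \<in> int_star"
    using assms(3) unfolding StateSpace_def by auto
  then show "SK \<sigma> (cube q) \<in> sets lebesgue" by (rule sets_lebesgue_SK)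
  show "enn2ereal (emeasure lebesgue (SK \<sigma> (cube q))) \<le> 2 ^ (CARD('n) + 1) * psi q \<sigma>"
  proof (cases "\<exists>x\<in>cube q. \<bar>\<sigma> x\<bar> \<noteq> \<infinity>")
    case False
    then have "SK \<sigma> (cube q) = {}" unfolding SK_def Sx_def by auto
    then show ?thesis using psi_nonneg[of q \<sigma>] by (simp add: zero_ennreal.rep_eq ereal_zero_le_0_iff)
  next
    case True
    then obtain x where "x \<in> cube q" "\<bar>\<sigma> x\<bar> \<noteq> \<infinity>" by (rule bexE)
    then obtain I J :: int where I: "Ival (cube q) \<sigma> = ereal (of_int I)"
      and J: "Jval (cube q) \<sigma> = ereal (of_int J)" and "I \<le> J"
      by (rule Ival_Jval_integers[OF StateSpace_finite_image_cube[OF assms(3,2)] int])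
    have "enn2ereal (emeasure lebesgue (SK \<sigma> (cube q))) \<le> 2 ^ (CARD('n) + 1) * lam q \<sigma> (I + 1)"
      using assms(3) I by (rule emeasure_SK_le_lam)
    also have "\<dots> \<le> 2 ^ (CARD('n) + 1) * psi q \<sigma>"
      using lam_le_psi[OF I J] \<open>I \<le> J\<close> by (intro ereal_mult_left_mono) auto
    finally show ?thesis .
  qed
qed

end
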